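(* For every $n\equiv 13 \pmod{16}$ (with $n\geq 13$), there exists an almost 2-perfect maximum 8-cycle packing of $K_n$.
   Context: An 8-cycle packing of $K_n$ on vertex set $\mathcal{X}$ is a triple $(\mathcal{X},\mathcal{C},\mathcal{L})$ with $\mathcal{C}$ a collection of pairwise edge-disjoint 8-cycles of $K_n$ and leave $\mathcal{L}$ the set of edges in no cycle of $\mathcal{C}$; it is maximum if $|\mathcal{L}|$ is minimum among all 8-cycle packings of $K_n$. For an 8-cycle $C$, an inside 8-cycle of $C$ is an 8-cycle on the same vertex set sharing no edge with $C$. The packing is almost 2-perfect if one can choose for each $C\in\mathcal{C}$ an inside 8-cycle $C'$ such that $(\mathcal{X},\{C'\},\mathcal{L})$ is again an 8-cycle packing with the same leave. *)

theory Defs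
  imports Main
begin

definition complete_edges :: "'a set \<Rightarrow> 'a set set" where
  "complete_edges X = {{u, v} | u v. u \<in> X \<and> v \<in> X \<and> u \<noteq> v}"

definition cycle_edges :: "'a list \<Rightarrow> 'a set set" where
  "cycle_edges vs = {{vs ! i, vs ! ((i + 1) mod length vs)} | i. i < length vs}"

definition is_8cycle :: "'a set \<Rightarrow> 'a set set \<Rightarrow> bool" where
  "is_8cycle X C \<longleftrightarrow> (\<exists>vs. length vs = 8 \<and> distinct vs \<and> set vs \<subseteq> X \<and> C = cycle_edges vs)"

definition cyc_vertices :: "'a set set \<Rightarrow> 'a set" where
  "cyc_vertices C = \<Union> C"

definition is_8cycle_packing :: "'a set \<Rightarrow> 'a set set set \<Rightarrow> 'a set set \<Rightarrow> bool" where
  "is_8cycle_packing X CC L \<longleftrightarrow>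
     (\<forall>C \<in> CC. is_8cycle X C) \<and>
     (\<forall>C1 \<in> CC. \<forall>C2 \<in> CC. C1 \<noteq> C2 \<longrightarrow> C1 \<inter> C2 = {}) \<and>
     L = complete_edges X - \<Union> CC"

definition is_max_8cycle_packing :: "'a set \<Rightarrow> 'a set set set \<Rightarrow> 'a set set \<Rightarrow> bool" where
  "is_max_8cycle_packing X CC L \<longleftrightarrow>
     is_8cycle_packing X CC L \<and>
     (\<forall>CC' L'. is_8cycle_packing X CC' L' \<longrightarrow> card L \<le> card L')"

definition is_inside_8cycle :: "'a set \<Rightarrow> 'a set set \<Rightarrow> 'a set set \<Rightarrow> bool" where
  "is_inside_8cycle X C C' \<longleftrightarrow>
     is_8cycle X C' \<and> cyc_vertices C' = cyc_vertices C \<and> C \<inter> C' = {}"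

definition almost_2perfect :: "'a set \<Rightarrow> 'a set set set \<Rightarrow> 'a set set \<Rightarrow> bool" where
  "almost_2perfect X CC L \<longleftrightarrow>
     (\<exists>f. (\<forall>C \<in> CC. is_inside_8cycle X C (f C)) \<and>
          (\<forall>C1 \<in> CC. \<forall>C2 \<in> CC. C1 \<noteq> C2 \<longrightarrow> f C1 \<inter> f C2 = {}) \<and>
          is_8cycle_packing X (f ` CC) L)"

end

theory Submission
  imports Defs "HOL-Library.Product_Lexorder"
begin

text \<open>
  Take the vertex set {0..<16k + 13} as a core {0..12} together with k groups of 16 vertices.
  Removing two triangles on the core, the edges of the complete graph split into blocks: the
  core K_13 minus the triangles, a K_17 on vertex 12 and each group, and copies of K_{4,4}
  between 4-sets (quads) lying in different parts. Each of these three small graphs has a paired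
  decomposition: pairs of an 8-cycle and an inside 8-cycle of it such that the outer cycles and
  the inside cycles both decompose the graph. Their union is an 8-cycle packing whose leave is
  the two triangles, and the inside cycles show that it is almost 2-perfect. It is maximum
  because the size of a leave is determined modulo 8 by the number of edges of the complete
  graph, and this leave has fewer than 8 edges.
\<close>

definition edges_of :: "('a \<times> 'a) list \<Rightarrow> 'a set set" where
  "edges_of es = (\<lambda>(a, b). {a, b}) ` set es"

definition cycle_arcs :: "'a list \<Rightarrow> ('a \<times> 'a) list" where
  "cycle_arcs vs = map (\<lambda>i. (vs ! i, vs ! ((i + 1) mod length vs))) [0..<length vs]"

lemma cycle_edges_eq_edges_of: "cycle_edges vs = edges_of (cycle_arcs vs)"
  unfolding cycle_edges_def edges_of_def cycle_arcs_def by auto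

lemma doubleton_in_edges_of_iff: "{x, y} \<in> edges_of es \<longleftrightarrow> (x, y) \<in> set es \<or> (y, x) \<in> set es"
  unfolding edges_of_def by (auto simp: doubleton_eq_iff)

lemma edges_of_disjoint_iff:
  "edges_of es \<inter> edges_of fs = {} \<longleftrightarrow> (\<forall>(a, b) \<in> set es. (a, b) \<notin> set fs \<and> (b, a) \<notin> set fs)"
  by (auto simp: edges_of_def[of es] doubleton_in_edges_of_iff)

lemma edges_of_concat: "(\<Union>x \<in> set xs. edges_of (f x)) = edges_of (concat (map f xs))"
  unfolding edges_of_def by auto

lemma edges_of_diff:
  "edges_of es - edges_of fs = edges_of (filter (\<lambda>(a, b). (a, b) \<notin> set fs \<and> (b, a) \<notin> set fs) es)"
  by (auto simp: edges_of_def[of es] edges_of_def[of "filter _ es"] doubleton_in_edges_of_iff)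

lemma Suc_mod_length_less: "i < length vs \<Longrightarrow> Suc i mod length vs < length vs"
  by (rule mod_less_divisor) linarith

lemma cycle_arcs_map: "cycle_arcs (map g vs) = map (map_prod g g) (cycle_arcs vs)"
proof -
  have "map g vs ! (Suc i mod length vs) = g (vs ! (Suc i mod length vs))" if "i < length vs" for i
    using that by (simp add: Suc_mod_length_less)
  then show ?thesis unfolding cycle_arcs_def by auto
qed

lemma cycle_edges_map: "cycle_edges (map g vs) = (`) g ` cycle_edges vs"
  unfolding cycle_edges_eq_edges_of cycle_arcs_map edges_of_def by (force simp: image_image)

lemma Union_cycle_edges:
  assumes "vs \<noteq> []"
  shows "\<Union> (cycle_edges vs) = set vs"
proof
  show "\<Union> (cycle_edges vs) \<subseteq> set vs"
  proof
    fix x assume "x \<in> \<Union> (cycle_edges vs)"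
    then obtain i where "i < length vs" "x = vs ! i \<or> x = vs ! (Suc i mod length vs)"
      unfolding cycle_edges_def by auto
    then show "x \<in> set vs" using Suc_mod_length_less nth_mem by metis
  qed
  show "set vs \<subseteq> \<Union> (cycle_edges vs)"
  proof
    fix x assume "x \<in> set vs"
    then obtain i where "i < length vs" "x = vs ! i" by (auto simp: in_set_conv_nth)
    then show "x \<in> \<Union> (cycle_edges vs)" unfolding cycle_edges_def by blast
  qed
qed

lemma successor_mod_not_symmetric:
  fixes i j n :: nat
  assumes "i < n" "j < n" "3 \<le> n" "i = Suc j mod n" "j = Suc i mod n"
  shows False
proof (cases "Suc j < n")
  case True
  then have "i = Suc j" using assms(4) by simp
  then show False using assms(2,3,5) by (cases "Suc i < n") (auto simp: mod_if split: if_splits)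
next
  case False
  then have "i = 0" using assms(2,4) by (simp add: mod_if)
  then show False using assms(3,5) False by (simp add: mod_if split: if_splits)
qed

lemma card_cycle_edges:
  assumes "distinct vs" "3 \<le> length vs"
  shows "card (cycle_edges vs) = length vs"
proof -
  let ?n = "length vs"
  let ?e = "\<lambda>i. {vs ! i, vs ! (Suc i mod ?n)}"
  have index_eq: "i = j" if "vs ! i = vs ! j" "i < ?n" "j < ?n" for i j
    using that nth_eq_iff_index_eq[OF assms(1)] by blast
  have "inj_on ?e {..<?n}"
  proof (rule inj_onI)
    fix i j assume "i \<in> {..<?n}" "j \<in> {..<?n}" and eq: "?e i = ?e j"
    then have i: "i < ?n" and j: "j < ?n" by simp_all
    have succ: "Suc i mod ?n < ?n" "Suc j mod ?n < ?n"
      using i j by (simp_all add: Suc_mod_length_less)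
    show "i = j"
    proof (rule ccontr)
      assume "i \<noteq> j"
      then have "vs ! i \<noteq> vs ! j" using index_eq i j by blast
      then have "vs ! i = vs ! (Suc j mod ?n)" "vs ! (Suc i mod ?n) = vs ! j"
        using eq by (simp_all add: doubleton_eq_iff)
      then have "i = Suc j mod ?n" "j = Suc i mod ?n"
        using index_eq i j succ by blast+
      then show False using successor_mod_not_symmetric i j assms(2) by blast
    qed
  qed
  moreover have "cycle_edges vs = ?e ` {..<?n}"
    unfolding cycle_edges_def setcompr_eq_image lessThan_def by simp
  ultimately show ?thesis by (simp add: card_image)
qed

lemma Union_complete_edges_subset: "\<Union> (complete_edges X) \<subseteq> X"
  unfolding complete_edges_def by auto

lemma finite_complete_edges: "finite X \<Longrightarrow> finite (complete_edges X)"
  by (rule finite_subset[of _ "Pow X"]) (auto simp: complete_edges_def)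

lemma complete_edges_mono: "X \<subseteq> Y \<Longrightarrow> complete_edges X \<subseteq> complete_edges Y"
  unfolding complete_edges_def by blast

lemma complete_edgesE:
  fixes X :: "'a::linorder set"
  assumes "e \<in> complete_edges X"
  obtains u v where "e = {u, v}" "u < v" "u \<in> X" "v \<in> X"
proof -
  obtain u v where "e = {u, v}" "u \<in> X" "v \<in> X" "u \<noteq> v"
    using assms unfolding complete_edges_def by blast
  show thesis
  proof (cases "u < v")
    case True
    then show ?thesis using that \<open>e = {u, v}\<close> \<open>u \<in> X\<close> \<open>v \<in> X\<close> by blast
  next
    case False
    then have "v < u" using \<open>u \<noteq> v\<close> by simp
    then show ?thesis using that[of v u] \<open>e = {u, v}\<close> \<open>u \<in> X\<close> \<open>v \<in> X\<close> by (simp add: insert_commute)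
  qed
qed

lemma complete_edges_lessThan:
  "complete_edges {..<n} = edges_of [(x, y). x \<leftarrow> [0..<n], y \<leftarrow> [Suc x..<n]]"
proof -
  have "{u, v} \<in> edges_of [(x, y). x \<leftarrow> [0..<n], y \<leftarrow> [Suc x..<n]]"
    if "u < n" "v < n" "u \<noteq> v" for u v
    using that by (cases "u < v") (auto simp: doubleton_in_edges_of_iff image_iff)
  moreover have "e \<in> complete_edges {..<n}"
    if "e \<in> edges_of [(x, y). x \<leftarrow> [0..<n], y \<leftarrow> [Suc x..<n]]" for e
    using that unfolding complete_edges_def edges_of_def by (fastforce dest: less_trans)
  ultimately show ?thesis
    unfolding complete_edges_def by blast
qed

lemma image_complete_edges:
  "inj_on g X \<Longrightarrow> (`) g ` complete_edges X = complete_edges (g ` X)"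
  unfolding complete_edges_def inj_on_def by (auto simp: image_iff) blast+

lemma cycle_edges_subset_complete_edges:
  assumes "distinct vs" "2 \<le> length vs" "set vs \<subseteq> X"
  shows "cycle_edges vs \<subseteq> complete_edges X"
proof
  fix e assume "e \<in> cycle_edges vs"
  then obtain i where i: "i < length vs" and e: "e = {vs ! i, vs ! (Suc i mod length vs)}"
    unfolding cycle_edges_def by auto
  have succ: "Suc i mod length vs < length vs" using i by (rule Suc_mod_length_less)
  have "i \<noteq> Suc i mod length vs"
    using i assms(2) by (cases "Suc i < length vs") (auto simp: mod_if)
  then have "vs ! i \<noteq> vs ! (Suc i mod length vs)"
    using nth_eq_iff_index_eq[OF assms(1) i succ] by simp
  moreover have "vs ! i \<in> X" "vs ! (Suc i mod length vs) \<in> X"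
    using nth_mem[OF i] nth_mem[OF succ] assms(3) by blast+
  ultimately show "e \<in> complete_edges X" unfolding complete_edges_def e by blast
qed

definition complete_bipartite_edges :: "'a set \<Rightarrow> 'a set \<Rightarrow> 'a set set" where
  "complete_bipartite_edges A B = {{a, b} | a b. a \<in> A \<and> b \<in> B}"

lemma complete_bipartite_edges_set:
  "complete_bipartite_edges (set as) (set bs) = edges_of (List.product as bs)"
  unfolding complete_bipartite_edges_def edges_of_def by auto

lemma image_complete_bipartite_edges:
  "(`) g ` complete_bipartite_edges A B = complete_bipartite_edges (g ` A) (g ` B)"
  unfolding complete_bipartite_edges_def by (auto simp: image_iff) (metis image_empty image_insert)

lemma Union_complete_bipartite_edges_subset: "\<Union> (complete_bipartite_edges A B) \<subseteq> A \<union> B"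
  unfolding complete_bipartite_edges_def by auto

lemma is_8cycle_subset_complete_edges: "is_8cycle X C \<Longrightarrow> C \<subseteq> complete_edges X"
  unfolding is_8cycle_def using cycle_edges_subset_complete_edges[of _ X] by force

lemma card_8cycle: "is_8cycle X C \<Longrightarrow> card C = 8"
  unfolding is_8cycle_def using card_cycle_edges by force

lemma card_leave_8cycle_packing:
  assumes "finite X" "is_8cycle_packing X CC L"
  shows "card L + 8 * card CC = card (complete_edges X)"
proof -
  let ?E = "complete_edges X"
  have "is_8cycle X C" if "C \<in> CC" for C
    using assms(2) that unfolding is_8cycle_packing_def by blast
  then have cycles: "C \<subseteq> ?E" "card C = 8" if "C \<in> CC" for C
    using that is_8cycle_subset_complete_edges card_8cycle by blast+
  have fin_E: "finite ?E" using assms(1) by (rule finite_complete_edges)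
  have sub: "\<Union>CC \<subseteq> ?E" using cycles by blast
  have fin_CC: "finite CC"
    by (rule finite_subset[of _ "Pow ?E"]) (use cycles fin_E in auto)
  have fin_C: "finite C" if "C \<in> CC" for C
    using cycles(1)[OF that] fin_E by (rule finite_subset)
  have "pairwise disjnt CC"
    using assms(2) unfolding is_8cycle_packing_def pairwise_def disjnt_def by blast
  then have "card (\<Union>CC) = (\<Sum>C\<in>CC. card C)"
    using fin_C by (rule card_Union_disjoint)
  also have "\<dots> = 8 * card CC" using cycles by simp
  finally have "card (\<Union>CC) = 8 * card CC" .
  moreover have "L = ?E - \<Union>CC"
    using assms(2) unfolding is_8cycle_packing_def by blast
  moreover have "card (\<Union>CC) \<le> card ?E" using fin_E sub by (rule card_mono)
  ultimately show ?thesis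
    using card_Diff_subset[OF finite_subset[OF sub fin_E] sub] by simp
qed

lemma is_max_8cycle_packing_if_card_leave_less:
  assumes "finite X" "is_8cycle_packing X CC L" "card L < 8"
  shows "is_max_8cycle_packing X CC L"
  unfolding is_max_8cycle_packing_def
proof (intro conjI allI impI)
  fix CC' L' assume "is_8cycle_packing X CC' L'"
  then have "card L + 8 * card CC = card L' + 8 * card CC'"
    using card_leave_8cycle_packing assms(1,2) by metis
  then show "card L \<le> card L'" using assms(3) by presburger
qed (rule assms(2))

lemma is_8cycle_cycle_edges:
  assumes "length vs = 8" "distinct vs" "cycle_edges vs \<subseteq> complete_edges X"
  shows "is_8cycle X (cycle_edges vs)"
proof -
  have "vs \<noteq> []" using assms(1) by auto
  then have "set vs = \<Union> (cycle_edges vs)" by (simp add: Union_cycle_edges)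
  also have "\<dots> \<subseteq> X" using Union_mono[OF assms(3)] Union_complete_edges_subset by (rule order_trans)
  finally show ?thesis using assms(1,2) unfolding is_8cycle_def by (intro exI[of _ vs]) simp
qed

lemma is_8cycle_packing_image:
  assumes "\<And>p. p \<in> P \<Longrightarrow> is_8cycle X (h p)" "pairwise (\<lambda>p q. h p \<inter> h q = {}) P"
    "(\<Union>p\<in>P. h p) = complete_edges X - L" "L \<subseteq> complete_edges X"
  shows "is_8cycle_packing X (h ` P) L"
  unfolding is_8cycle_packing_def
proof (intro conjI)
  show "\<forall>C\<in>h ` P. is_8cycle X C" using assms(1) by blast
  show "\<forall>C1\<in>h ` P. \<forall>C2\<in>h ` P. C1 \<noteq> C2 \<longrightarrow> C1 \<inter> C2 = {}"
    using assms(2) unfolding pairwise_def by fast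
  show "L = complete_edges X - \<Union> (h ` P)" using assms(3,4) by blast
qed

section \<open>Paired decompositions\<close>

definition inside_8cycle_pair :: "'a list \<times> 'a list \<Rightarrow> bool" where
  "inside_8cycle_pair p \<longleftrightarrow>
     length (fst p) = 8 \<and> distinct (fst p) \<and> length (snd p) = 8 \<and> distinct (snd p) \<and>
     set (snd p) = set (fst p) \<and> cycle_edges (fst p) \<inter> cycle_edges (snd p) = {}"

text \<open>The outer cycles (first components) and the inside cycles (second components) each
  decompose H.\<close>
definition paired_8cycle_decomposition :: "'a set set \<Rightarrow> ('a list \<times> 'a list) set \<Rightarrow> bool" where
  "paired_8cycle_decomposition H P \<longleftrightarrow> (\<forall>p \<in> P. inside_8cycle_pair p) \<and>
     (\<forall>sel \<in> {fst, snd}. pairwise (\<lambda>p q. cycle_edges (sel p) \<inter> cycle_edges (sel q) = {}) P \<and>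
        (\<Union>p\<in>P. cycle_edges (sel p)) = H)"

lemma paired_8cycle_decompositionD:
  assumes "paired_8cycle_decomposition H P"
  shows "p \<in> P \<Longrightarrow> inside_8cycle_pair p"
    and "sel \<in> {fst, snd} \<Longrightarrow> pairwise (\<lambda>p q. cycle_edges (sel p) \<inter> cycle_edges (sel q) = {}) P"
    and "sel \<in> {fst, snd} \<Longrightarrow> (\<Union>p\<in>P. cycle_edges (sel p)) = H"
  using assms unfolding paired_8cycle_decomposition_def by auto

lemma paired_8cycle_decompositionI:
  assumes "\<And>p. p \<in> P \<Longrightarrow> inside_8cycle_pair p"
    and "\<And>sel. sel \<in> {fst, snd} \<Longrightarrow> pairwise (\<lambda>p q. cycle_edges (sel p) \<inter> cycle_edges (sel q) = {}) P"
    and "\<And>sel. sel \<in> {fst, snd} \<Longrightarrow> (\<Union>p\<in>P. cycle_edges (sel p)) = H"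
  shows "paired_8cycle_decomposition H P"
  using assms unfolding paired_8cycle_decomposition_def by simp

lemma paired_8cycle_decomposition_packing:
  assumes dec: "paired_8cycle_decomposition (complete_edges X - L) P" and "L \<subseteq> complete_edges X"
    and sel: "sel \<in> {fst, snd}"
  shows "is_8cycle_packing X ((\<lambda>p. cycle_edges (sel p)) ` P) L"
proof (rule is_8cycle_packing_image)
  show "is_8cycle X (cycle_edges (sel p))" if "p \<in> P" for p
  proof (rule is_8cycle_cycle_edges)
    show "length (sel p) = 8" "distinct (sel p)"
      using paired_8cycle_decompositionD(1)[OF dec that] sel
      unfolding inside_8cycle_pair_def by auto
    show "cycle_edges (sel p) \<subseteq> complete_edges X"
      using paired_8cycle_decompositionD(3)[OF dec sel] that by blast
  qed
qed (use assms paired_8cycle_decompositionD(2,3)[OF dec sel] in simp_all)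

lemma paired_8cycle_decomposition_inj_on_outer:
  assumes dec: "paired_8cycle_decomposition H P"
  shows "inj_on (\<lambda>p. cycle_edges (fst p)) P"
proof (rule inj_onI)
  fix p q assume pq: "p \<in> P" "q \<in> P" "cycle_edges (fst p) = cycle_edges (fst q)"
  show "p = q"
  proof (rule ccontr)
    assume "p \<noteq> q"
    then have "cycle_edges (fst p) = {}"
      using paired_8cycle_decompositionD(2)[OF dec, of fst] pq unfolding pairwise_def by auto
    moreover have "card (cycle_edges (fst p)) = 8"
      using paired_8cycle_decompositionD(1)[OF dec pq(1)] card_cycle_edges[of "fst p"]
      unfolding inside_8cycle_pair_def by simp
    ultimately show False by simp
  qed
qed

lemma paired_8cycle_decomposition_almost_2perfect:
  assumes dec: "paired_8cycle_decomposition (complete_edges X - L) P" and "L \<subseteq> complete_edges X"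
  defines "CC \<equiv> (\<lambda>p. cycle_edges (fst p)) ` P"
  shows "almost_2perfect X CC L"
proof -
  let ?outer = "\<lambda>p. cycle_edges (fst p)" and ?inner = "\<lambda>p. cycle_edges (snd p)"
  have inner_packing: "is_8cycle_packing X (?inner ` P) L"
    using paired_8cycle_decomposition_packing[OF assms(1,2), of snd] by simp
  have inner_disjoint: "pairwise (\<lambda>p q. ?inner p \<inter> ?inner q = {}) P"
    using paired_8cycle_decompositionD(2)[OF dec, of snd] by simp
  define f where "f C = ?inner (the_inv_into P ?outer C)" for C
  have f_outer: "f (?outer p) = ?inner p" if "p \<in> P" for p
    unfolding f_def using the_inv_into_f_f[OF paired_8cycle_decomposition_inj_on_outer[OF dec] that]
    by simp
  have "f ` CC = ?inner ` P"
    unfolding CC_def image_image using f_outer by (intro image_cong) simp_all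
  moreover have "is_inside_8cycle X C (f C)" if "C \<in> CC" for C
  proof -
    obtain p where p: "p \<in> P" "C = ?outer p" using \<open>C \<in> CC\<close> unfolding CC_def by blast
    have "is_8cycle X (?inner p)" using inner_packing p(1) unfolding is_8cycle_packing_def by blast
    moreover have "fst p \<noteq> []" "snd p \<noteq> []" "set (snd p) = set (fst p)" "?outer p \<inter> ?inner p = {}"
      using paired_8cycle_decompositionD(1)[OF dec p(1)] unfolding inside_8cycle_pair_def by auto
    then have "cyc_vertices (?inner p) = cyc_vertices (?outer p)" "?outer p \<inter> ?inner p = {}"
      unfolding cyc_vertices_def by (simp_all add: Union_cycle_edges)
    ultimately show ?thesis unfolding is_inside_8cycle_def p(2) f_outer[OF p(1)] by blast
  qed
  moreover have "f C1 \<inter> f C2 = {}" if C: "C1 \<in> CC" "C2 \<in> CC" "C1 \<noteq> C2" for C1 C2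
  proof -
    obtain p q where "p \<in> P" "q \<in> P" "C1 = ?outer p" "C2 = ?outer q"
      using C(1,2) unfolding CC_def by blast
    then show ?thesis
      using C(3) inner_disjoint f_outer unfolding pairwise_def by metis
  qed
  ultimately show ?thesis
    unfolding almost_2perfect_def using inner_packing by (intro exI[of _ f]) auto
qed

lemma image_cycle_edges_disjoint:
  assumes "inj_on g V" "cycle_edges c \<subseteq> Pow V" "cycle_edges d \<subseteq> Pow V"
    "cycle_edges c \<inter> cycle_edges d = {}"
  shows "cycle_edges (map g c) \<inter> cycle_edges (map g d) = {}"
  using inj_on_image_Int[OF inj_on_image_Pow[OF assms(1)] assms(2,3)] assms(4)
  by (simp add: cycle_edges_map)

lemma paired_8cycle_decomposition_image:
  assumes dec: "paired_8cycle_decomposition H P" and inj: "inj_on g (\<Union>H)"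
  shows "paired_8cycle_decomposition ((`) g ` H) (map_prod (map g) (map g) ` P)"
proof -
  let ?g = "map_prod (map g) (map g)"
  note pairs = paired_8cycle_decompositionD(1)[OF dec]
  have in_Pow: "cycle_edges (h p) \<subseteq> Pow (\<Union>H)" if "p \<in> P" "h \<in> {fst, snd}" for p h
    using that paired_8cycle_decompositionD(3)[OF dec that(2)] by blast
  have image_sel: "\<exists>h \<in> {fst, snd}. \<forall>p. sel (?g p) = map g (h p)"
    if "sel \<in> {fst, snd}" for sel :: "'b list \<times> 'b list \<Rightarrow> 'b list"
    using that by auto
  show ?thesis
  proof (rule paired_8cycle_decompositionI)
    fix p' assume "p' \<in> ?g ` P"
    then obtain p where p: "p' = ?g p" "p \<in> P" by (rule imageE)
    have Pow: "cycle_edges (fst p) \<subseteq> Pow (\<Union>H)" "cycle_edges (snd p) \<subseteq> Pow (\<Union>H)"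
      by (rule in_Pow[OF p(2)]; simp)+
    have "fst p \<noteq> []" using pairs[OF p(2)] unfolding inside_8cycle_pair_def by auto
    then have "set (fst p) \<subseteq> \<Union>H" using Pow(1) Union_cycle_edges[of "fst p"] by blast
    then have "inj_on g (set (fst p))" using inj by (rule inj_on_subset[rotated])
    then show "inside_8cycle_pair p'"
      using pairs[OF p(2)] image_cycle_edges_disjoint[OF inj Pow]
        unfolding p(1) inside_8cycle_pair_def
      by (simp add: distinct_map)
  next
    fix sel :: "'b list \<times> 'b list \<Rightarrow> 'b list" assume "sel \<in> {fst, snd}"
    then obtain h where h: "h \<in> {fst, snd}" "\<forall>p. sel (?g p) = map g (h p)" using image_sel by blast
    show "pairwise (\<lambda>p q. cycle_edges (sel p) \<inter> cycle_edges (sel q) = {}) (?g ` P)"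
      unfolding pairwise_image
    proof (rule pairwiseI)
      fix p q assume "p \<in> P" "q \<in> P" "p \<noteq> q"
      then have "cycle_edges (h p) \<inter> cycle_edges (h q) = {}"
        using paired_8cycle_decompositionD(2)[OF dec h(1)] unfolding pairwise_def by blast
      then show "?g p \<noteq> ?g q \<longrightarrow> cycle_edges (sel (?g p)) \<inter> cycle_edges (sel (?g q)) = {}"
        using image_cycle_edges_disjoint[OF inj in_Pow[OF \<open>p \<in> P\<close> h(1)] in_Pow[OF \<open>q \<in> P\<close> h(1)]]
        by (simp add: h(2))
    qed
    show "(\<Union>p\<in>?g ` P. cycle_edges (sel p)) = (`) g ` H"
      unfolding paired_8cycle_decompositionD(3)[OF dec h(1), symmetric]
      by (simp add: h(2) cycle_edges_map image_UN)
  qed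
qed

lemma paired_8cycle_decomposition_UN:
  fixes H :: "'i \<Rightarrow> 'a set set"
  assumes dec: "\<And>i. i \<in> I \<Longrightarrow> paired_8cycle_decomposition (H i) (P i)"
    and disjoint: "\<And>i j. i \<in> I \<Longrightarrow> j \<in> I \<Longrightarrow> i \<noteq> j \<Longrightarrow> H i \<inter> H j = {}"
  shows "paired_8cycle_decomposition (\<Union>i\<in>I. H i) (\<Union>i\<in>I. P i)"
proof (rule paired_8cycle_decompositionI)
  show "inside_8cycle_pair p" if p: "p \<in> (\<Union>i\<in>I. P i)" for p
  proof -
    obtain i where "i \<in> I" "p \<in> P i" using p by blast
    then show ?thesis using paired_8cycle_decompositionD(1)[OF dec] by blast
  qed
  fix sel :: "'a list \<times> 'a list \<Rightarrow> 'a list" assume sel: "sel \<in> {fst, snd}"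
  have cover: "(\<Union>p\<in>P i. cycle_edges (sel p)) = H i" if "i \<in> I" for i
    using paired_8cycle_decompositionD(3)[OF dec[OF that] sel] .
  show "(\<Union>p\<in>(\<Union>i\<in>I. P i). cycle_edges (sel p)) = (\<Union>i\<in>I. H i)"
    using cover by simp
  show "pairwise (\<lambda>p q. cycle_edges (sel p) \<inter> cycle_edges (sel q) = {}) (\<Union>i\<in>I. P i)"
  proof (rule pairwiseI)
    fix p q assume "p \<in> (\<Union>i\<in>I. P i)" "q \<in> (\<Union>i\<in>I. P i)" "p \<noteq> q"
    then obtain i j where ij: "i \<in> I" "j \<in> I" "p \<in> P i" "q \<in> P j" by blast
    show "cycle_edges (sel p) \<inter> cycle_edges (sel q) = {}"
    proof (cases "i = j")
      case True
      then show ?thesis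
        using paired_8cycle_decompositionD(2)[OF dec[OF ij(1)] sel] ij(3,4) \<open>p \<noteq> q\<close>
        unfolding pairwise_def by blast
    next
      case False
      have "cycle_edges (sel p) \<subseteq> H i" "cycle_edges (sel q) \<subseteq> H j"
        using cover[OF ij(1)] cover[OF ij(2)] ij(3,4) by blast+
      then show ?thesis using disjoint[OF ij(1,2) False] by blast
    qed
  qed
qed

section \<open>Checking paired decompositions by evaluation\<close>

definition normalized_arcs :: "'a::linorder list \<Rightarrow> ('a \<times> 'a) list" where
  "normalized_arcs vs = map (\<lambda>(a, b). (min a b, max a b)) (cycle_arcs vs)"

lemma cycle_edges_eq_edges_of_normalized: "cycle_edges vs = edges_of (normalized_arcs vs)"
proof -
  have "(\<lambda>(a, b). {a, b}) \<circ> (\<lambda>(a, b). (min a b, max a b)) = (\<lambda>(a, b). {a, b :: 'a})"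
    by (auto simp: fun_eq_iff min_def max_def)
  then show ?thesis
    unfolding cycle_edges_eq_edges_of normalized_arcs_def edges_of_def set_map image_comp by simp
qed

lemma normalized_arcs_ordered: "\<forall>(a, b) \<in> set (normalized_arcs vs). a \<le> b"
  unfolding normalized_arcs_def by (auto simp: min_def max_def)

lemma edges_of_disjoint_if_ordered:
  fixes xs ys :: "('a::linorder \<times> 'a) list"
  assumes "\<forall>(a, b) \<in> set xs. a \<le> b" "\<forall>(a, b) \<in> set ys. a \<le> b" "set xs \<inter> set ys = {}"
  shows "edges_of xs \<inter> edges_of ys = {}"
proof -
  have ordered_eq: "(a, b) = (c, d)" if "{a, b} = {c, d}" "a \<le> b" "c \<le> d" for a b c d :: 'a
    using that by (auto simp: doubleton_eq_iff)
  show ?thesis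
  proof (rule ccontr)
    assume "edges_of xs \<inter> edges_of ys \<noteq> {}"
    then obtain a b c d
      where ab: "(a, b) \<in> set xs" and cd: "(c, d) \<in> set ys" and eq: "{a, b} = {c, d}"
      unfolding edges_of_def by auto
    have "a \<le> b" "c \<le> d" using assms(1) ab assms(2) cd by auto
    with eq have "(a, b) = (c, d)" by (rule ordered_eq)
    then show False using assms(3) ab cd by auto
  qed
qed

lemma pairwise_disjoint_if_distinct_concat:
  assumes "distinct (concat (map f xs))" "\<forall>x \<in> set xs. f x \<noteq> []"
  shows "pairwise (\<lambda>x y. set (f x) \<inter> set (f y) = {}) (set xs)"
proof (rule pairwiseI)
  fix x y assume xy: "x \<in> set xs" "y \<in> set xs" "x \<noteq> y"
  have "removeAll [] (map f xs) = map f xs" using assms(2) by (intro removeAll_id) auto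
  then have "inj_on f (set xs)"
    using assms(1) distinct_map by (metis distinct_concat_iff)
  then have "f x \<noteq> f y" using xy by (auto dest: inj_onD)
  then show "set (f x) \<inter> set (f y) = {}"
    using assms(1) xy unfolding distinct_concat_iff by auto
qed

text \<open>Comparing the sorted list of all edges with a duplicate-free list checks edge-disjointness
  and covering at once, which keeps evaluation fast.\<close>
lemma cycle_edges_exact_cover:
  fixes cyc :: "'b \<Rightarrow> 'a::linorder list"
  assumes sorted: "sort (concat (map (\<lambda>x. normalized_arcs (cyc x)) xs)) = es"
    and "distinct es" and nonempty: "\<forall>x \<in> set xs. cyc x \<noteq> []"
  shows "pairwise (\<lambda>x y. cycle_edges (cyc x) \<inter> cycle_edges (cyc y) = {}) (set xs)"
    and "(\<Union>x \<in> set xs. cycle_edges (cyc x)) = edges_of es"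
proof -
  have "distinct (concat (map (\<lambda>x. normalized_arcs (cyc x)) xs))"
    using sorted \<open>distinct es\<close> distinct_sort by metis
  moreover have "\<forall>x \<in> set xs. normalized_arcs (cyc x) \<noteq> []"
    using nonempty by (simp add: normalized_arcs_def cycle_arcs_def)
  ultimately have
    "pairwise (\<lambda>x y. set (normalized_arcs (cyc x)) \<inter> set (normalized_arcs (cyc y)) = {}) (set xs)"
    by (rule pairwise_disjoint_if_distinct_concat)
  then show "pairwise (\<lambda>x y. cycle_edges (cyc x) \<inter> cycle_edges (cyc y) = {}) (set xs)"
    unfolding cycle_edges_eq_edges_of_normalized
    by (rule pairwise_mono) (simp_all add: edges_of_disjoint_if_ordered normalized_arcs_ordered)
  have "set es = set (concat (map (\<lambda>x. normalized_arcs (cyc x)) xs))"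
    using sorted set_sort by metis
  then show "(\<Union>x \<in> set xs. cycle_edges (cyc x)) = edges_of es"
    unfolding cycle_edges_eq_edges_of_normalized edges_of_concat by (simp add: edges_of_def)
qed

lemma paired_8cycle_decomposition_by_sorting:
  fixes Ps :: "('a::linorder list \<times> 'a list) list"
  assumes "\<forall>p \<in> set Ps. inside_8cycle_pair p"
    and "sort (concat (map (\<lambda>p. normalized_arcs (fst p)) Ps)) = es"
    and "sort (concat (map (\<lambda>p. normalized_arcs (snd p)) Ps)) = es"
    and "distinct es"
  shows "paired_8cycle_decomposition (edges_of es) (set Ps)"
proof -
  have "\<forall>p \<in> set Ps. fst p \<noteq> []" "\<forall>p \<in> set Ps. snd p \<noteq> []"
    using assms(1) unfolding inside_8cycle_pair_def by auto
  then show ?thesis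
    unfolding paired_8cycle_decomposition_def
    using assms(1) cycle_edges_exact_cover[OF assms(2,4)] cycle_edges_exact_cover[OF assms(3,4)]
    by simp
qed

section \<open>Three small paired decompositions\<close>

definition two_triangles :: "nat set set" where
  "two_triangles = {{0, 1}, {1, 2}, {0, 2}, {3, 4}, {4, 5}, {3, 5}}"

lemma two_triangles_edges_of:
  "two_triangles = edges_of [(0, 1), (1, 2), (0, 2), (3, 4), (4, 5), (3, 5)]"
  by (simp add: two_triangles_def edges_of_def)

definition k13_pairs :: "(nat list \<times> nat list) list" where
  "k13_pairs =
    [([0, 3, 12, 10, 7, 11, 6, 8], [0, 6, 12, 7, 3, 8, 11, 10]),
     ([0, 4, 1, 9, 10, 2, 12, 6], [0, 9, 2, 6, 1, 10, 4, 12]),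
     ([0, 5, 2, 7, 1, 8, 11, 12], [0, 7, 5, 1, 12, 8, 2, 11]),
     ([0, 7, 5, 8, 2, 3, 1, 11], [0, 3, 11, 5, 2, 7, 1, 8]),
     ([0, 9, 5, 6, 3, 11, 4, 10], [0, 4, 6, 11, 9, 3, 10, 5]),
     ([1, 5, 10, 8, 9, 4, 7, 12], [1, 4, 8, 7, 10, 12, 5, 9]),
     ([1, 6, 4, 2, 11, 9, 3, 10], [1, 3, 2, 10, 6, 9, 4, 11]),
     ([2, 6, 7, 3, 8, 4, 12, 9], [2, 4, 7, 9, 8, 6, 3, 12]),
     ([5, 11, 10, 6, 9, 7, 8, 12], [5, 6, 7, 11, 12, 9, 10, 8])]"

definition k17_pairs :: "(nat list \<times> nat list) list" where
  "k17_pairs = map (\<lambda>i. (map (\<lambda>x. (x + i) mod 17) [0, 2, 6, 14, 8, 1, 4, 5],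
                         map (\<lambda>x. (x + i) mod 17) [0, 6, 4, 14, 2, 1, 5, 8])) [0..<17]"

definition k44_pairs :: "(nat list \<times> nat list) list" where
  "k44_pairs = (let c = [0, 4, 1, 5, 2, 6, 3, 7]; d = [0, 5, 3, 4, 2, 7, 1, 6] in [(c, d), (d, c)])"

lemma k13_decomposition:
  "paired_8cycle_decomposition (complete_edges {..<13} - two_triangles) (set k13_pairs)"
  unfolding complete_edges_lessThan two_triangles_edges_of edges_of_diff
  by (rule paired_8cycle_decomposition_by_sorting,
      unfold inside_8cycle_pair_def cycle_edges_eq_edges_of edges_of_disjoint_iff)
    code_simp+

lemma k17_decomposition: "paired_8cycle_decomposition (complete_edges {..<17}) (set k17_pairs)"
  unfolding complete_edges_lessThan
  by (rule paired_8cycle_decomposition_by_sorting,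
      unfold inside_8cycle_pair_def cycle_edges_eq_edges_of edges_of_disjoint_iff)
    code_simp+

lemma k44_decomposition:
  "paired_8cycle_decomposition (complete_bipartite_edges {0..<4} {4..<8}) (set k44_pairs)"
  unfolding set_upt[symmetric] complete_bipartite_edges_set
  by (rule paired_8cycle_decomposition_by_sorting,
      unfold inside_8cycle_pair_def cycle_edges_eq_edges_of edges_of_disjoint_iff)
    code_simp+

section \<open>The blocks of the complete graph on 16k + 13 vertices\<close>

text \<open>Group i is the vertex set {13 + 16i..<29 + 16i}; quad a of group i is its a-th run of four
  consecutive vertices, and the vertices 0..11 of the core form three low quads {4b..<4b + 4}.
  The block Core is K_13 on the core minus the two triangles, Group i is the K_17 on vertex 12
  and group i, Link i a b joins quad a of group i to low quad b, and Bridge i j a b (i < j)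
  joins quad a of group i to quad b of group j.\<close>
datatype block = Core | Group nat | Link nat nat nat | Bridge nat nat nat nat

definition vertex_group :: "nat \<Rightarrow> nat set" where
  "vertex_group i = {13 + 16 * i..<29 + 16 * i}"

definition vertex_quad :: "nat \<Rightarrow> nat \<Rightarrow> nat set" where
  "vertex_quad i a = {13 + 16 * i + 4 * a..<17 + 16 * i + 4 * a}"

definition blocks :: "nat \<Rightarrow> block set" where
  "blocks k = insert Core (Group ` {..<k} \<union> {Link i a b | i a b. i < k \<and> a < 4 \<and> b < 3}
     \<union> {Bridge i j a b | i j a b. i < j \<and> j < k \<and> a < 4 \<and> b < 4})"

fun block_map :: "block \<Rightarrow> nat \<Rightarrow> nat" where
  "block_map Core x = x"
| "block_map (Group i) x = (if x = 16 then 12 else 13 + 16 * i + x)"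
| "block_map (Link i a b) x = (if x < 4 then 13 + 16 * i + 4 * a + x else 4 * b + x - 4)"
| "block_map (Bridge i j a b) x =
    (if x < 4 then 13 + 16 * i + 4 * a + x else 13 + 16 * j + 4 * b + x - 4)"

fun block_base_edges :: "block \<Rightarrow> nat set set" where
  "block_base_edges Core = complete_edges {..<13} - two_triangles"
| "block_base_edges (Group i) = complete_edges {..<17}"
| "block_base_edges _ = complete_bipartite_edges {0..<4} {4..<8}"

fun block_base_pairs :: "block \<Rightarrow> (nat list \<times> nat list) list" where
  "block_base_pairs Core = k13_pairs"
| "block_base_pairs (Group i) = k17_pairs"
| "block_base_pairs _ = k44_pairs"

definition block_edges :: "block \<Rightarrow> nat set set" where
  "block_edges \<beta> = (`) (block_map \<beta>) ` block_base_edges \<beta>"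

definition block_pairs :: "block \<Rightarrow> (nat list \<times> nat list) set" where
  "block_pairs \<beta> = map_prod (map (block_map \<beta>)) (map (block_map \<beta>)) ` set (block_base_pairs \<beta>)"

lemma block_base_decomposition:
  "paired_8cycle_decomposition (block_base_edges \<beta>) (set (block_base_pairs \<beta>))"
  by (cases \<beta>) (simp_all add: k13_decomposition k17_decomposition k44_decomposition)

lemma inj_on_block_map:
  assumes "\<beta> \<in> blocks k"
  shows "inj_on (block_map \<beta>) (\<Union> (block_base_edges \<beta>))"
proof -
  have "\<Union> (block_base_edges \<beta>) \<subseteq> (case \<beta> of Core \<Rightarrow> {..<13} | Group i \<Rightarrow> {..<17} | _ \<Rightarrow> {..<8})"
    using Union_complete_edges_subset Union_complete_bipartite_edges_subset
    by (cases \<beta>) fastforce+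
  moreover have "inj_on (block_map \<beta>) (case \<beta> of Core \<Rightarrow> {..<13} | Group i \<Rightarrow> {..<17} | _ \<Rightarrow> {..<8})"
    using assms by (auto simp: blocks_def inj_on_def split: if_splits)
  ultimately show ?thesis by (rule inj_on_subset[rotated])
qed

lemma block_decomposition:
  "\<beta> \<in> blocks k \<Longrightarrow> paired_8cycle_decomposition (block_edges \<beta>) (block_pairs \<beta>)"
  unfolding block_edges_def block_pairs_def
  by (rule paired_8cycle_decomposition_image[OF block_base_decomposition inj_on_block_map])

lemma block_edges_Core: "block_edges Core = complete_edges {..<13} - two_triangles"
  unfolding block_edges_def by simp

lemma block_edges_Group: "block_edges (Group i) = complete_edges (insert 12 (vertex_group i))"
proof -
  have "block_map (Group i) ` {..<17} = insert 12 ((+) (13 + 16 * i) ` {..<16})"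
    by (simp add: lessThan_Suc[of 16, simplified] image_iff) (auto intro: image_cong)
  also have "\<dots> = insert 12 (vertex_group i)"
    unfolding vertex_group_def lessThan_atLeast0 image_add_atLeastLessThan'
      by (simp add: add.commute)
  finally have "block_map (Group i) ` {..<17} = insert 12 (vertex_group i)" .
  moreover have "inj_on (block_map (Group i)) {..<17}" by (auto simp: inj_on_def)
  ultimately show ?thesis
    unfolding block_edges_def block_base_edges.simps by (simp only: image_complete_edges)
qed

lemma block_map_quad_image:
  "block_map (Link i a b) ` {0..<4} = vertex_quad i a"
  "block_map (Bridge i j a b') ` {0..<4} = vertex_quad i a"
  unfolding vertex_quad_def by (auto simp: image_iff Bex_def; presburger)+

lemma block_edges_Link:
  "block_edges (Link i a b) = complete_bipartite_edges (vertex_quad i a) {4 * b..<4 * b + 4}"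
proof -
  have "block_map (Link i a b) ` {4..<8} = {4 * b..<4 * b + 4}"
    by (auto simp: image_iff Bex_def; presburger)
  then show ?thesis
    unfolding block_edges_def block_base_edges.simps image_complete_bipartite_edges
      block_map_quad_image
    by simp
qed

lemma block_edges_Bridge:
  "block_edges (Bridge i j a b) = complete_bipartite_edges (vertex_quad i a) (vertex_quad j b)"
proof -
  have "block_map (Bridge i j a b) ` {4..<8} = vertex_quad j b"
    unfolding vertex_quad_def by (auto simp: image_iff Bex_def; presburger)
  then show ?thesis
    unfolding block_edges_def block_base_edges.simps image_complete_bipartite_edges
      block_map_quad_image
    by simp
qed

lemma vertex_group_div: "v \<in> vertex_group i \<Longrightarrow> (v - 13) div 16 = i"
  unfolding vertex_group_def by (rule div_nat_eqI) auto

lemma mem_vertex_group: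
  assumes "13 \<le> v"
  shows "v \<in> vertex_group ((v - 13) div 16)"
proof -
  have "v - 13 = 16 * ((v - 13) div 16) + (v - 13) mod 16" "(v - 13) mod 16 < 16" by simp_all
  then show ?thesis using assms unfolding vertex_group_def by auto
qed

lemma vertex_quad_div:
  assumes "v \<in> vertex_quad i a" "a < 4"
  shows "(v - 13) div 16 = i \<and> (v - 13) mod 16 div 4 = a"
proof -
  obtain t where t: "v - 13 = (4 * a + t) + 16 * i" "t < 4"
    using assms(1) unfolding vertex_quad_def by (intro that[of "v - 13 - 16 * i - 4 * a"]) auto
  have "4 * a + t < 16" using t(2) assms(2) by simp
  then show ?thesis unfolding t(1) using t(2) by simp
qed

lemma mem_vertex_quad:
  assumes "13 \<le> v"
  shows "v \<in> vertex_quad ((v - 13) div 16) ((v - 13) mod 16 div 4)"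
proof -
  define q r where "q = (v - 13) div 16" and "r = (v - 13) mod 16"
  have "v = 13 + 16 * q + r" "r = 4 * (r div 4) + r mod 4" "r mod 4 < 4"
    using assms unfolding q_def r_def by simp_all
  then show ?thesis
    unfolding q_def[symmetric] r_def[symmetric] vertex_quad_def atLeastLessThan_iff by linarith
qed

lemma mod_16_div_4_less: "(x :: nat) mod 16 div 4 < 4"
  by presburger

lemma vertex_quad_subset: "a < 4 \<Longrightarrow> vertex_quad i a \<subseteq> vertex_group i"
  unfolding vertex_quad_def vertex_group_def by auto

lemma vertex_group_bound: "i < k \<Longrightarrow> vertex_group i \<subseteq> {..<16 * k + 13}"
  unfolding vertex_group_def by auto

lemma notin_two_triangles: "v \<in> e \<Longrightarrow> 6 \<le> v \<Longrightarrow> e \<notin> two_triangles"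
  unfolding two_triangles_def by auto

lemma two_triangles_subset: "6 \<le> n \<Longrightarrow> two_triangles \<subseteq> complete_edges {..<n}"
  unfolding two_triangles_def complete_edges_def by force

lemma card_two_triangles: "card two_triangles = 6"
  unfolding two_triangles_def by (simp add: doubleton_eq_iff)

text \<open>Meaningful only for u < v.\<close>
definition block_of :: "nat \<Rightarrow> nat \<Rightarrow> block" where
  "block_of u v =
    (if v < 13 then Core
     else if u = 12 \<or> (13 \<le> u \<and> (u - 13) div 16 = (v - 13) div 16) then Group ((v - 13) div 16)
     else if u < 12 then Link ((v - 13) div 16) ((v - 13) mod 16 div 4) (u div 4)
     else Bridge ((u - 13) div 16) ((v - 13) div 16)
       ((u - 13) mod 16 div 4) ((v - 13) mod 16 div 4))"

definition block_of_edge :: "nat set \<Rightarrow> block" where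
  "block_of_edge e = block_of (Min e) (Max e)"

lemma block_of_edge_doubleton: "u < v \<Longrightarrow> block_of_edge {u, v} = block_of u v"
  unfolding block_of_edge_def by (simp add: min_def max_def)

lemma complete_bipartite_edges_subset:
  "A \<subseteq> X \<Longrightarrow> B \<subseteq> X \<Longrightarrow> A \<inter> B = {} \<Longrightarrow> complete_bipartite_edges A B \<subseteq> complete_edges X"
  unfolding complete_bipartite_edges_def complete_edges_def by blast

lemma block_edges_subset:
  assumes "\<beta> \<in> blocks k"
  shows "block_edges \<beta> \<subseteq> complete_edges {..<16 * k + 13} - two_triangles"
proof -
  let ?X = "{..<16 * k + 13}"
  have non_core: "block_edges \<beta> \<subseteq> complete_edges ?X \<and> (\<forall>e \<in> block_edges \<beta>. \<exists>v \<in> e. 13 \<le> v)"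
    if not_core: "\<beta> \<noteq> Core"
  proof -
    consider i where "\<beta> = Group i" "i < k"
      | i a b where "\<beta> = Link i a b" "i < k" "a < 4" "b < 3"
      | i j a b where "\<beta> = Bridge i j a b" "i < j" "j < k" "a < 4" "b < 4"
      using assms not_core unfolding blocks_def by blast
    then show ?thesis
    proof cases
      case (1 i)
      have "insert 12 (vertex_group i) \<subseteq> ?X" using vertex_group_bound[OF 1(2)] by auto
      moreover have "\<exists>v \<in> e. 13 \<le> v" if "e \<in> complete_edges (insert 12 (vertex_group i))" for e
        using that by (auto elim!: complete_edgesE simp: vertex_group_def)
      ultimately show ?thesis unfolding 1 block_edges_Group using complete_edges_mono by blast
    next
      case (2 i a b)
      have A: "vertex_quad i a \<subseteq> ?X \<inter> {13..}"
        using 2 vertex_quad_subset[of a i] vertex_group_bound[of i k]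
          by (auto simp: vertex_group_def)
      have B: "{4 * b..<4 * b + 4} \<subseteq> ?X \<inter> {..<12}" using 2 by auto
      moreover have "vertex_quad i a \<inter> {4 * b..<4 * b + 4} = {}"
        using 2 unfolding vertex_quad_def by auto
      ultimately have
        "complete_bipartite_edges (vertex_quad i a) {4 * b..<4 * b + 4} \<subseteq> complete_edges ?X"
        using A by (intro complete_bipartite_edges_subset) blast+
      moreover have
        "\<forall>e \<in> complete_bipartite_edges (vertex_quad i a) {4 * b..<4 * b + 4}. \<exists>v \<in> e. 13 \<le> v"
        using A unfolding complete_bipartite_edges_def by auto
      ultimately show ?thesis unfolding 2 block_edges_Link by blast
    next
      case (3 i j a b)
      have "vertex_quad i a \<subseteq> vertex_group i" "vertex_quad j b \<subseteq> vertex_group j"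
        using 3 vertex_quad_subset by blast+
      moreover have "vertex_group i \<subseteq> ?X \<inter> {13..}" "vertex_group j \<subseteq> ?X"
        "vertex_group i \<inter> vertex_group j = {}"
        using 3 vertex_group_bound[of i k] vertex_group_bound[of j k]
          by (auto simp: vertex_group_def)
      ultimately have A: "vertex_quad i a \<subseteq> ?X \<inter> {13..}" "vertex_quad j b \<subseteq> ?X"
        "vertex_quad i a \<inter> vertex_quad j b = {}" by blast+
      then have "complete_bipartite_edges (vertex_quad i a) (vertex_quad j b) \<subseteq> complete_edges ?X"
        by (intro complete_bipartite_edges_subset) blast+
      moreover have
        "\<forall>e \<in> complete_bipartite_edges (vertex_quad i a) (vertex_quad j b). \<exists>v \<in> e. 13 \<le> v"
        using A(1) unfolding complete_bipartite_edges_def by auto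
      ultimately show ?thesis unfolding 3 block_edges_Bridge by blast
    qed
  qed
  show ?thesis
  proof (cases "\<beta> = Core")
    case True
    then show ?thesis using complete_edges_mono[of "{..<13}" ?X] by (auto simp: block_edges_Core)
  next
    case False
    then show ?thesis using non_core notin_two_triangles by fastforce
  qed
qed

lemma block_of_edge_block_edges:
  assumes "\<beta> \<in> blocks k" "e \<in> block_edges \<beta>"
  shows "block_of_edge e = \<beta>"
proof -
  consider "\<beta> = Core" | i where "\<beta> = Group i"
    | i a b where "\<beta> = Link i a b" "a < 4" "b < 3"
    | i j a b where "\<beta> = Bridge i j a b" "i < j" "a < 4" "b < 4"
    using assms(1) unfolding blocks_def by blast
  then show ?thesis
  proof cases
    case 1
    then obtain u v where "e = {u, v}" "u < v" "v < 13"
      using assms(2) by (auto simp: block_edges_Core elim: complete_edgesE)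
    then show ?thesis using 1 by (simp add: block_of_edge_doubleton block_of_def)
  next
    case (2 i)
    then obtain u v where "e = {u, v}" "u < v" "u \<in> insert 12 (vertex_group i)" "v \<in> vertex_group i"
      using assms(2) by (auto simp: block_edges_Group vertex_group_def elim!: complete_edgesE)
    then show ?thesis
      using 2 vertex_group_div[of u i] vertex_group_div[of v i]
      by (auto simp: block_of_edge_doubleton block_of_def vertex_group_def)
  next
    case (3 i a b)
    then obtain u v where uv: "e = {v, u}" "u \<in> vertex_quad i a" "v \<in> {4 * b..<4 * b + 4}"
      using assms(2) by (auto simp: block_edges_Link complete_bipartite_edges_def insert_commute)
    moreover have "13 \<le> u" "v < 12"
      using uv(2,3) 3(2,3) vertex_quad_subset[of a i] by (auto simp: vertex_group_def)
    ultimately show ?thesis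
      using 3 vertex_quad_div[OF uv(2) 3(2)] by (auto simp: block_of_edge_doubleton block_of_def)
  next
    case (4 i j a b)
    then obtain u v where uv: "e = {u, v}" "u \<in> vertex_quad i a" "v \<in> vertex_quad j b"
      using assms(2) by (auto simp: block_edges_Bridge complete_bipartite_edges_def)
    moreover have "u \<in> vertex_group i" "v \<in> vertex_group j"
      using uv(2,3) vertex_quad_subset 4(3,4) by blast+
    then have "13 \<le> u" "u < v" using 4(2) by (auto simp: vertex_group_def)
    ultimately show ?thesis
      using 4 vertex_quad_div[OF uv(2) 4(3)] vertex_quad_div[OF uv(3) 4(4)]
      by (auto simp: block_of_edge_doubleton block_of_def)
  qed
qed

lemma block_of_mem_blocks:
  assumes "u < v" "v < 16 * k + 13"
  shows "block_of u v \<in> blocks k"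
proof (cases "v < 13")
  case True
  then show ?thesis by (simp add: block_of_def blocks_def)
next
  case False
  then have "v - 13 < k * 16" using assms(2) by linarith
  then have "(v - 13) div 16 < k" by (rule less_mult_imp_div_less)
  moreover have "(u - 13) div 16 \<le> (v - 13) div 16" using assms(1) by (simp add: div_le_mono)
  moreover have "u div 4 < 3" if "u < 12" using that by simp
  ultimately show ?thesis
    unfolding block_of_def blocks_def using mod_16_div_4_less by auto
qed

lemma edge_in_block_of:
  assumes "u < v" and "v < 13 \<Longrightarrow> {u, v} \<notin> two_triangles"
  shows "{u, v} \<in> block_edges (block_of u v)"
proof -
  define i a where "i = (v - 13) div 16" and "a = (v - 13) mod 16 div 4"
  consider (small) "v < 13" | (group) "13 \<le> v" "u = 12 \<or> (13 \<le> u \<and> (u - 13) div 16 = i)"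
    | (link) "13 \<le> v" "u < 12" | (bridge) "13 \<le> v" "13 \<le> u" "(u - 13) div 16 \<noteq> i"
    using assms(1) by linarith
  then show ?thesis
  proof cases
    case small
    then have "{u, v} \<in> complete_edges {..<13}"
      using assms(1) unfolding complete_edges_def by (intro CollectI exI[of _ u] exI[of _ v]) auto
    then show ?thesis using small assms(2) by (simp add: block_of_def block_edges_Core)
  next
    case group
    then have "u \<in> insert 12 (vertex_group i)" "v \<in> vertex_group i"
      using mem_vertex_group[of u] mem_vertex_group[of v] unfolding i_def by auto
    then have "{u, v} \<in> complete_edges (insert 12 (vertex_group i))"
      using assms(1) unfolding complete_edges_def by (intro CollectI exI[of _ u] exI[of _ v]) auto
    moreover have "block_of u v = Group i" using group unfolding block_of_def i_def by auto
    ultimately show ?thesis by (simp add: block_edges_Group)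
  next
    case link
    then have "v \<in> vertex_quad i a" "u \<in> {4 * (u div 4)..<4 * (u div 4) + 4}"
      using mem_vertex_quad unfolding i_def a_def by auto
    then have
      "{u, v} \<in> complete_bipartite_edges (vertex_quad i a) {4 * (u div 4)..<4 * (u div 4) + 4}"
      unfolding complete_bipartite_edges_def
        by (intro CollectI exI[of _ v] exI[of _ u]) (auto simp: insert_commute)
    moreover have "block_of u v = Link i a (u div 4)" using link unfolding block_of_def i_def a_def
      by auto
    ultimately show ?thesis by (simp add: block_edges_Link)
  next
    case bridge
    define i' a' where "i' = (u - 13) div 16" and "a' = (u - 13) mod 16 div 4"
    have "u \<in> vertex_quad i' a'" "v \<in> vertex_quad i a"
      using bridge mem_vertex_quad unfolding i_def a_def i'_def a'_def by auto
    then have "{u, v} \<in> complete_bipartite_edges (vertex_quad i' a') (vertex_quad i a)"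
      unfolding complete_bipartite_edges_def by blast
    moreover have "block_of u v = Bridge i' i a' a"
      using bridge assms(1) unfolding block_of_def i_def a_def i'_def a'_def by auto
    ultimately show ?thesis by (simp add: block_edges_Bridge)
  qed
qed

lemma complete_edges_partition:
  "(\<Union>\<beta>\<in>blocks k. block_edges \<beta>) = complete_edges {..<16 * k + 13} - two_triangles"
proof
  show "(\<Union>\<beta>\<in>blocks k. block_edges \<beta>) \<subseteq> complete_edges {..<16 * k + 13} - two_triangles"
    using block_edges_subset by blast
  show "complete_edges {..<16 * k + 13} - two_triangles \<subseteq> (\<Union>\<beta>\<in>blocks k. block_edges \<beta>)"
  proof
    fix e assume e: "e \<in> complete_edges {..<16 * k + 13} - two_triangles"
    then obtain u v where uv: "e = {u, v}" "u < v" "v < 16 * k + 13" by (auto elim: complete_edgesE)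
    then have "e \<in> block_edges (block_of u v)" using e edge_in_block_of[OF uv(2)] by blast
    then show "e \<in> (\<Union>\<beta>\<in>blocks k. block_edges \<beta>)" using block_of_mem_blocks[OF uv(2,3)] by blast
  qed
qed

lemma block_edges_disjoint:
  "\<beta> \<in> blocks k \<Longrightarrow> \<gamma> \<in> blocks k \<Longrightarrow> \<beta> \<noteq> \<gamma> \<Longrightarrow> block_edges \<beta> \<inter> block_edges \<gamma> = {}"
  using block_of_edge_block_edges[of \<beta> k] block_of_edge_block_edges[of \<gamma> k] by blast

theorem lemma3p7:
  fixes n :: nat
  assumes "n mod 16 = 13"
  shows "\<exists>CC L. is_max_8cycle_packing {..<n} CC L \<and> almost_2perfect {..<n} CC L"
proof -
  define k where "k = n div 16"
  have n: "n = 16 * k + 13" using div_mult_mod_eq[of n 16] assms unfolding k_def by linarith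
  let ?P = "\<Union>\<beta>\<in>blocks k. block_pairs \<beta>"
  define CC where "CC = (\<lambda>p. cycle_edges (fst p)) ` ?P"
  have dec: "paired_8cycle_decomposition (complete_edges {..<n} - two_triangles) ?P"
    unfolding n complete_edges_partition[symmetric]
    by (rule paired_8cycle_decomposition_UN)
      (use block_decomposition block_edges_disjoint in blast)+
  have leave: "two_triangles \<subseteq> complete_edges {..<n}" using n by (intro two_triangles_subset) simp
  have packing: "is_8cycle_packing {..<n} CC two_triangles"
    unfolding CC_def using paired_8cycle_decomposition_packing[OF dec leave, of fst] by simp
  then have "is_max_8cycle_packing {..<n} CC two_triangles"
    using is_max_8cycle_packing_if_card_leave_less[OF finite_lessThan] card_two_triangles by simp
  moreover have "almost_2perfect {..<n} CC two_triangles"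
    unfolding CC_def by (rule paired_8cycle_decomposition_almost_2perfect[OF dec leave])
  ultimately show ?thesis by blast
qed

end
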